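(* Let $n\ge 3$ and $N=r(n,n)$. Let $G$ be a bichromatic graph on $N$ vertices, and suppose $G$ contains distinct unbuilt pairs $p_1,\ldots,p_s$ and distinct unbuilt pairs $q_1,\ldots,q_t$ such that $p_i$ is independent to $q_j$ for every $1\le i\le s$ and $1\le j\le t$. Then $s(G)\ge \min(s,t)$.
   Context: $r(n,n)$ is the least $N$ such that every red/blue colouring of the edges of $K_N$ contains a monochromatic $K_n$. A bichromatic graph is a triple $G=(V,R,B)$ with $R,B\subseteq\binom{V}{2}$ and $R\cap B=\emptyset$; $R$ are the red edges, $B$ the blue edges, and $e(G)=|R|+|B|$. An unbuilt pair of $G$ is a pair of distinct vertices $u,v$ with $uv\notin R\cup B$. Two vertex-disjoint pairs $(u_1,u_2)$ and $(v_1,v_2)$ are independent in $G$ if both are unbuilt and there exist a red edge $u_iv_j\in R$ and a blue edge $u_{i'}v_{j'}\in B$ for some (not necessarily distinct) $i,i',j,j'\in\{1,2\}$. The $(n,n;N)$-game: Builder and Painter play on $N$ vertices; each turn Builder builds an edge between two non-adjacent vertices and Painter colours it red or blue; Builder wins once a monochromatic $K_n$ (red or blue) appears. For a bichromatic graph $G$ on $N$ vertices, $s(G)$ is the largest nonnegative integer $s$ such that Builder has a strategy that, starting the $(n,n;N)$-game from the position $G$ (its already built and coloured edges), guarantees a win using at most $\binom{N}{2}-e(G)-s$ further moves regardless of Painter's play. *)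

theory Defs
  imports Main
begin

definition pairs :: "'a set \<Rightarrow> 'a set set" where
  "pairs V = {e. \<exists>u v. u \<in> V \<and> v \<in> V \<and> u \<noteq> v \<and> e = {u, v}}"

text \<open>Diagonal Ramsey number r(n,n): least N such that every red/blue colouring
  of K_N (red edges = C, blue edges = the rest) has a monochromatic K_n.\<close>
definition ramsey_num :: "nat \<Rightarrow> nat" where
  "ramsey_num n = (LEAST N. \<forall>C :: nat set set. \<exists>S \<subseteq> {..<N}. card S = n \<and>
      (pairs S \<subseteq> C \<or> pairs S \<inter> C = {}))"

definition bichromatic :: "'a set \<Rightarrow> 'a set set \<Rightarrow> 'a set set \<Rightarrow> bool" where
  "bichromatic V R B \<longleftrightarrow> R \<subseteq> pairs V \<and> B \<subseteq> pairs V \<and> R \<inter> B = {}"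

definition unbuilt :: "'a set \<Rightarrow> 'a set set \<Rightarrow> 'a set set \<Rightarrow> 'a set \<Rightarrow> bool" where
  "unbuilt V R B p \<longleftrightarrow> p \<in> pairs V \<and> p \<notin> R \<and> p \<notin> B"

definition independent :: "'a set \<Rightarrow> 'a set set \<Rightarrow> 'a set set \<Rightarrow> 'a set \<Rightarrow> 'a set \<Rightarrow> bool" where
  "independent V R B p q \<longleftrightarrow> p \<inter> q = {} \<and> unbuilt V R B p \<and> unbuilt V R B q \<and>
     (\<exists>x\<in>p. \<exists>y\<in>q. {x, y} \<in> R) \<and> (\<exists>x\<in>p. \<exists>y\<in>q. {x, y} \<in> B)"

definition has_mono :: "'a set \<Rightarrow> nat \<Rightarrow> 'a set set \<Rightarrow> 'a set set \<Rightarrow> bool" where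
  "has_mono V n R B \<longleftrightarrow> (\<exists>S \<subseteq> V. card S = n \<and> (pairs S \<subseteq> R \<or> pairs S \<subseteq> B))"

text \<open>builder_wins V n k R B: in the (n,n;|V|)-game started from position (R,B),
  Builder has a strategy that guarantees a win using at most k further moves,
  whatever Painter does.\<close>
fun builder_wins :: "'a set \<Rightarrow> nat \<Rightarrow> nat \<Rightarrow> 'a set set \<Rightarrow> 'a set set \<Rightarrow> bool" where
  "builder_wins V n 0 R B = has_mono V n R B"
| "builder_wins V n (Suc k) R B = (has_mono V n R B \<or>
     (\<exists>e \<in> pairs V - (R \<union> B).
        builder_wins V n k (insert e R) B \<and> builder_wins V n k R (insert e B)))"

text \<open>s(G): the largest nonnegative s such that Builder can guarantee a win within
  C(N,2) - e(G) - s further moves (a nonnegative number of moves).\<close>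
definition s_val :: "'a set \<Rightarrow> nat \<Rightarrow> 'a set set \<Rightarrow> 'a set set \<Rightarrow> nat" where
  "s_val V n R B = (GREATEST s. int s \<le> int (card V choose 2) - int (card R + card B) \<and>
      builder_wins V n (nat (int (card V choose 2) - int (card R + card B) - int s)) R B)"

end

theory Submission
  imports Defs "HOL-Library.Ramsey"
begin

text \<open>Builder first builds every unbuilt pair outside \<open>P \<union> Q\<close>. Whatever Painter does,
  every pair of \<open>P\<close> is joined to every pair of \<open>Q\<close> by a red and by a blue edge, so no
  monochromatic clique contains a pair of \<open>P\<close> and a pair of \<open>Q\<close>. Hence, if some colouring
  of \<open>P\<close> and some colouring of \<open>Q\<close> both avoided a monochromatic \<open>K\<^sub>n\<close>, their union
  would contradict \<open>N = r(n,n)\<close>. So one of the two families forces a monochromatic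
  \<open>K\<^sub>n\<close> however it is coloured, and Builder finishes by building it. This takes
  \<open>u - |P| - |Q| + max |P| |Q| = u - min |P| |Q|\<close> moves, \<open>u\<close> being the number of
  unbuilt pairs.\<close>

lemma pairs_eq_nsets: "pairs V = nsets V 2"
  unfolding pairs_def nsets_def by (auto simp: card_2_iff)

lemma finite_pairs: "finite V \<Longrightarrow> finite (pairs V)"
  unfolding pairs_eq_nsets by (rule finite_imp_finite_nsets)

lemma card_pairs: "card (pairs V) = card V choose 2"
  unfolding pairs_eq_nsets by (rule card_nsets)

lemma pairs_mono: "S \<subseteq> V \<Longrightarrow> pairs S \<subseteq> pairs V"
  unfolding pairs_def by blast

lemma doubleton_in_pairs: "x \<in> S \<Longrightarrow> y \<in> S \<Longrightarrow> x \<noteq> y \<Longrightarrow> {x, y} \<in> pairs S"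
  unfolding pairs_def by blast

lemma pairs_subset: "p \<in> pairs S \<Longrightarrow> p \<subseteq> S"
  unfolding pairs_def by blast

lemma pairs_image:
  assumes "inj_on h S"
  shows "pairs (h ` S) = image h ` pairs S"
proof
  show "pairs (h ` S) \<subseteq> image h ` pairs S"
    unfolding pairs_def by (auto intro!: image_eqI[where x = "{_, _}"])
  show "image h ` pairs S \<subseteq> pairs (h ` S)"
    using assms unfolding pairs_def inj_on_def by auto
qed

lemma pairs_subset_iff_clique: "pairs S \<subseteq> C \<longleftrightarrow> clique S C"
  unfolding pairs_def clique_def by blast

lemma pairs_disjoint_iff_indep: "pairs S \<inter> C = {} \<longleftrightarrow> indep S C"
  unfolding pairs_def indep_def by blast

lemma ramsey_num_homogeneous_lessThan:
  "\<forall>C. \<exists>S \<subseteq> {..<ramsey_num n}. card S = n \<and> (pairs S \<subseteq> C \<or> pairs S \<inter> C = {})"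
proof -
  obtain N where "\<forall>(V::nat set) E. finite V \<and> card V \<ge> N \<longrightarrow>
      (\<exists>S \<subseteq> V. card S = n \<and> clique S E \<or> card S = n \<and> indep S E)"
    using ramsey2[of n n] by blast
  then have "\<forall>C. \<exists>S \<subseteq> {..<N}. card S = n \<and> (pairs S \<subseteq> C \<or> pairs S \<inter> C = {})"
    unfolding pairs_subset_iff_clique pairs_disjoint_iff_indep
    by (metis card_lessThan finite_lessThan order_refl)
  then show ?thesis
    unfolding ramsey_num_def by (rule LeastI)
qed

lemma ramsey_num_homogeneous:
  assumes "finite V" "card V = ramsey_num n"
  shows "\<exists>S \<subseteq> V. card S = n \<and> (pairs S \<subseteq> C \<or> pairs S \<inter> C = {})"
proof -
  obtain h where h: "bij_betw h {..<ramsey_num n} V"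
    using ex_bij_betw_nat_finite[OF assms(1)] assms(2) by (auto simp: atLeast0LessThan)
  obtain S where S: "S \<subseteq> {..<ramsey_num n}" "card S = n"
    and hom: "pairs S \<subseteq> {e. h ` e \<in> C} \<or> pairs S \<inter> {e. h ` e \<in> C} = {}"
    using ramsey_num_homogeneous_lessThan by blast
  have inj: "inj_on h S"
    using h S(1) by (auto simp: bij_betw_def intro: inj_on_subset)
  show ?thesis
  proof (intro exI conjI)
    show "h ` S \<subseteq> V"
      using h S(1) by (auto simp: bij_betw_def)
    show "card (h ` S) = n"
      using card_image[OF inj] S(2) by simp
    show "pairs (h ` S) \<subseteq> C \<or> pairs (h ` S) \<inter> C = {}"
      using hom unfolding pairs_image[OF inj] by blast
  qed
qed

text \<open>The part of independence the argument uses; unlike \<open>independent\<close> it stays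
  true when further edges are built.\<close>

definition joined :: "'a set set \<Rightarrow> 'a set set \<Rightarrow> 'a set set \<Rightarrow> bool" where
  "joined D P Q \<longleftrightarrow> (\<forall>p\<in>P. \<forall>q\<in>Q. \<exists>x\<in>p. \<exists>y\<in>q. x \<noteq> y \<and> {x, y} \<in> D)"

lemma joined_mono: "joined D P Q \<Longrightarrow> D \<subseteq> D' \<Longrightarrow> joined D' P Q"
  unfolding joined_def by blast

lemma independent_imp_joined:
  assumes "\<forall>p\<in>P. \<forall>q\<in>Q. independent V R B p q"
  shows "joined R P Q" and "joined B P Q"
proof -
  have "x \<noteq> y" if "independent V R B p q" "x \<in> p" "y \<in> q" for p q x y
    using that unfolding independent_def by blast
  then show "joined R P Q" "joined B P Q"
    using assms unfolding independent_def joined_def by meson+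
qed

lemma homogeneous_misses_joined_family:
  assumes "pairs S \<inter> D = {}" and "joined D P Q"
  shows "pairs S \<inter> P = {} \<or> pairs S \<inter> Q = {}"
proof (rule ccontr)
  assume "\<not> ?thesis"
  then obtain p q where p: "p \<in> pairs S" "p \<in> P" and q: "q \<in> pairs S" "q \<in> Q"
    by blast
  obtain x y where xy: "x \<in> p" "y \<in> q" "x \<noteq> y" "{x, y} \<in> D"
    using assms(2) p(2) q(2) unfolding joined_def by blast
  have "{x, y} \<in> pairs S"
    using xy(1-3) pairs_subset[OF p(1)] pairs_subset[OF q(1)] by (intro doubleton_in_pairs) auto
  then show False
    using assms(1) xy(4) by blast
qed

lemma one_family_forces_mono:
  assumes "finite V" "card V = ramsey_num n"
    and "R \<inter> B = {}" "(P \<union> Q) \<inter> (R \<union> B) = {}" "pairs V \<subseteq> R \<union> B \<union> P \<union> Q"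
    and "joined R P Q" "joined B P Q"
  shows "(\<forall>Y\<subseteq>P. has_mono V n (R \<union> Y) (B \<union> (P - Y))) \<or>
         (\<forall>Z\<subseteq>Q. has_mono V n (R \<union> Z) (B \<union> (Q - Z)))"
proof (rule ccontr)
  assume "\<not> ?thesis"
  then obtain Y Z where Y: "Y \<subseteq> P" "\<not> has_mono V n (R \<union> Y) (B \<union> (P - Y))"
    and Z: "Z \<subseteq> Q" "\<not> has_mono V n (R \<union> Z) (B \<union> (Q - Z))"
    by blast
  obtain S where S: "S \<subseteq> V" "card S = n"
    and hom: "pairs S \<subseteq> R \<union> Y \<union> Z \<or> pairs S \<inter> (R \<union> Y \<union> Z) = {}"
    using ramsey_num_homogeneous[OF assms(1,2)] by blast
  from hom show False
  proof
    assume red: "pairs S \<subseteq> R \<union> Y \<union> Z"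
    then have "pairs S \<inter> B = {}"
      using assms(3,4) Y(1) Z(1) by blast
    then have "pairs S \<inter> P = {} \<or> pairs S \<inter> Q = {}"
      using assms(7) by (rule homogeneous_misses_joined_family)
    then have "pairs S \<subseteq> R \<union> Y \<or> pairs S \<subseteq> R \<union> Z"
      using red Y(1) Z(1) by blast
    then show False
      using Y(2) Z(2) S unfolding has_mono_def by blast
  next
    assume blue: "pairs S \<inter> (R \<union> Y \<union> Z) = {}"
    then have "pairs S \<inter> R = {}"
      by blast
    then have "pairs S \<inter> P = {} \<or> pairs S \<inter> Q = {}"
      using assms(6) by (rule homogeneous_misses_joined_family)
    moreover have "pairs S \<subseteq> B \<union> (P - Y) \<union> (Q - Z)"
      using blue pairs_mono[OF S(1)] assms(5) by blast
    ultimately have "pairs S \<subseteq> B \<union> (P - Y) \<or> pairs S \<subseteq> B \<union> (Q - Z)"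
      by blast
    then show False
      using Y(2) Z(2) S unfolding has_mono_def by blast
  qed
qed

lemma has_mono_imp_builder_wins: "has_mono V n R B \<Longrightarrow> builder_wins V n k R B"
  by (cases k) simp_all

lemma builder_wins_by_building:
  assumes "finite E" "E \<subseteq> pairs V - (R \<union> B)"
    and "\<And>X. X \<subseteq> E \<Longrightarrow> builder_wins V n j (R \<union> X) (B \<union> (E - X))"
  shows "builder_wins V n (card E + j) R B"
  using assms
proof (induction E arbitrary: R B rule: finite_induct)
  case empty
  then show ?case by simp
next
  case (insert e F)
  have red: "builder_wins V n (card F + j) (insert e R) B"
  proof (rule insert.IH)
    show "F \<subseteq> pairs V - (insert e R \<union> B)"
      using insert.prems(1) insert.hyps(2) by blast
    fix X assume "X \<subseteq> F"
    then have "builder_wins V n j (R \<union> insert e X) (B \<union> (insert e F - insert e X))"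
      by (intro insert.prems(2)) blast
    moreover have "insert e F - insert e X = F - X"
      using insert.hyps(2) by blast
    ultimately show "builder_wins V n j (insert e R \<union> X) (B \<union> (F - X))"
      by simp
  qed
  have blue: "builder_wins V n (card F + j) R (insert e B)"
  proof (rule insert.IH)
    show "F \<subseteq> pairs V - (R \<union> insert e B)"
      using insert.prems(1) insert.hyps(2) by blast
    fix X assume X: "X \<subseteq> F"
    then have "builder_wins V n j (R \<union> X) (B \<union> (insert e F - X))"
      by (intro insert.prems(2)) blast
    moreover have "B \<union> (insert e F - X) = insert e B \<union> (F - X)"
      using X insert.hyps(2) by blast
    ultimately show "builder_wins V n j (R \<union> X) (insert e B \<union> (F - X))"
      by simp
  qed
  show ?case
    using red blue insert.prems(1) insert.hyps by auto
qed

lemma builder_wins_independent_families: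
  assumes "finite V" "card V = ramsey_num n" "bichromatic V R B"
    and "\<forall>p\<in>P. unbuilt V R B p" "\<forall>q\<in>Q. unbuilt V R B q"
    and "\<forall>p\<in>P. \<forall>q\<in>Q. independent V R B p q"
  shows "builder_wins V n (card (pairs V - (R \<union> B)) - min (card P) (card Q)) R B"
proof -
  define W where "W = pairs V - (R \<union> B)"
  define E where "E = W - (P \<union> Q)"
  have "finite W"
    unfolding W_def using finite_pairs[OF assms(1)] by blast
  have PQW: "P \<union> Q \<subseteq> W"
    using assms(4,5) unfolding W_def unbuilt_def by blast
  have disj: "P \<inter> Q = {}"
    using assms(6) unfolding independent_def unbuilt_def pairs_def by blast
  have fin: "finite P" "finite Q" "finite E"
    using PQW \<open>finite W\<close> finite_subset unfolding E_def by blast+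
  have after_E: "builder_wins V n (max (card P) (card Q)) (R \<union> X) (B \<union> (E - X))"
    if "X \<subseteq> E" for X
  proof -
    have "(\<forall>Y\<subseteq>P. has_mono V n (R \<union> X \<union> Y) (B \<union> (E - X) \<union> (P - Y))) \<or>
          (\<forall>Z\<subseteq>Q. has_mono V n (R \<union> X \<union> Z) (B \<union> (E - X) \<union> (Q - Z)))"
      using assms(3) PQW that independent_imp_joined[OF assms(6)]
      by (intro one_family_forces_mono[OF assms(1,2)])
        (auto simp: bichromatic_def W_def E_def elim: joined_mono)
    then show ?thesis
    proof
      assume "\<forall>Y\<subseteq>P. has_mono V n (R \<union> X \<union> Y) (B \<union> (E - X) \<union> (P - Y))"
      then have "builder_wins V n (card P + (max (card P) (card Q) - card P)) (R \<union> X) (B \<union> (E - X))"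
        using fin PQW disj that
        by (intro builder_wins_by_building has_mono_imp_builder_wins) (auto simp: E_def W_def)
      then show ?thesis by simp
    next
      assume "\<forall>Z\<subseteq>Q. has_mono V n (R \<union> X \<union> Z) (B \<union> (E - X) \<union> (Q - Z))"
      then have "builder_wins V n (card Q + (max (card P) (card Q) - card Q)) (R \<union> X) (B \<union> (E - X))"
        using fin PQW disj that
        by (intro builder_wins_by_building has_mono_imp_builder_wins) (auto simp: E_def W_def)
      then show ?thesis by simp
    qed
  qed
  have "builder_wins V n (card E + max (card P) (card Q)) R B"
    by (rule builder_wins_by_building[OF fin(3) _ after_E]) (auto simp: E_def W_def)
  moreover have "card E + max (card P) (card Q) = card W - min (card P) (card Q)"
  proof -
    have "card E = card W - (card P + card Q)" "card P + card Q \<le> card W"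
      using card_Diff_subset[of "P \<union> Q" W] card_mono[OF \<open>finite W\<close> PQW]
        card_Un_disjoint[OF fin(1,2) disj] fin PQW unfolding E_def by simp_all
    then show ?thesis
      by (auto simp: max_def min_def)
  qed
  ultimately show ?thesis
    unfolding W_def[symmetric] by simp
qed

lemma card_unbuilt:
  assumes "finite V" "bichromatic V R B"
  shows "card (pairs V - (R \<union> B)) + (card R + card B) = card V choose 2"
proof -
  have sub: "R \<union> B \<subseteq> pairs V" and disj: "R \<inter> B = {}"
    using assms(2) unfolding bichromatic_def by auto
  have fin: "finite (pairs V)" "finite R" "finite B"
    using finite_pairs[OF assms(1)] sub finite_subset by blast+
  have "card (pairs V - (R \<union> B)) + card (R \<union> B) = card (pairs V)"
    using card_Diff_subset[OF _ sub] card_mono[OF fin(1) sub] fin by simp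
  then show ?thesis
    using card_Un_disjoint[OF fin(2,3) disj] card_pairs by simp
qed

lemma le_s_val:
  assumes "finite V" "bichromatic V R B" "s \<le> card (pairs V - (R \<union> B))"
    and "builder_wins V n (card (pairs V - (R \<union> B)) - s) R B"
  shows "s \<le> s_val V n R B"
proof -
  let ?u = "int (card V choose 2) - int (card R + card B)"
  have u: "?u = int (card (pairs V - (R \<union> B)))"
    using arg_cong[OF card_unbuilt[OF assms(1,2)], of int] by simp
  have "int s \<le> ?u \<and> builder_wins V n (nat (?u - int s)) R B"
    using assms(3,4) unfolding u by (simp add: nat_diff_distrib)
  moreover have "t \<le> card V choose 2" if "int t \<le> ?u \<and> builder_wins V n (nat (?u - int t)) R B" for t
    using conjunct1[OF that] by linarith
  ultimately show ?thesis
    unfolding s_val_def by (rule Greatest_le_nat)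
qed

theorem lemma2p5:
  fixes V :: "'a set" and n :: nat and R B P Q :: "'a set set"
  assumes "n \<ge> 3"
    and "finite V" and "card V = ramsey_num n"
    and "bichromatic V R B"
    and "\<forall>p\<in>P. unbuilt V R B p" and "\<forall>q\<in>Q. unbuilt V R B q"
    and "finite P" and "finite Q"
    and "\<forall>p\<in>P. \<forall>q\<in>Q. independent V R B p q"
  shows "min (card P) (card Q) \<le> s_val V n R B"
proof (rule le_s_val[OF assms(2,4)])
  have "P \<subseteq> pairs V - (R \<union> B)"
    using assms(5) unfolding unbuilt_def by blast
  then show "min (card P) (card Q) \<le> card (pairs V - (R \<union> B))"
    using finite_pairs[OF assms(2)] by (meson card_mono finite_Diff min.coboundedI1 order_trans)
  show "builder_wins V n (card (pairs V - (R \<union> B)) - min (card P) (card Q)) R B"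
    using assms(2-6,9) by (rule builder_wins_independent_families)
qed

end
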